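(* Consider an extension of the Bounded--Memory Adversary Model in which the Adversary additionally has query access, throughout the entire interaction, to a persistent infinite binary sequence drawn before the interaction, each bit uniform on $\{0,1\}$ and independent of all other randomness. For any streaming algorithm and any $\delta$, if there is an Adversary in this extended model that causes the algorithm to fail (output an incorrect estimate in some round) with probability greater than $\delta$, then there is an Adversary in the (non-extended) Bounded--Memory Adversary Model that causes the algorithm to fail with probability greater than $\delta$.
   Context: Fix $n,m$, a function $f:\mathbb{Z}^n\to\{0\}\cup[1,\alpha]$ with integer $\alpha\ge2$, and $\epsilon>0$. For $x,y\ge0$, $y$ is a $(1+\epsilon)$--multiplicative approximation to $x$ if $x\le y<(1+\epsilon)x$. Updates are pairs $(i_j,\Delta_j)\in[n]\times\{-1,1\}$ accumulating into frequency vectors $v^{(j)}$ with $v^{(j)}_i=\sum_{j'\le j,\,i_{j'}=i}\Delta_{j'}$. Bounded--Memory Adversary Model: a game of $m$ rounds (with $m$ known to both parties) between an Adversary and an Algorithm. The Adversary has a persistent memory of at most $k$ bits (read/write, retained across rounds), a read-only estimate memory containing the most recent estimate $y_{j-1}$ (empty in round 1), an unbounded working memory erased after each round, and fresh random bits each round that are discarded afterwards. In round $j$ the Adversary computes $(i_j,\Delta_j)$ as a function only of the fresh randomness, the persistent memory and the estimate memory (and may rewrite the persistent memory); the Algorithm receives the update and outputs $y_j$, which overwrites the estimate memory. The Algorithm fails if for some $j\in[m]$, $y_j$ is not a $(1+\epsilon)$--multiplicative approximation to $f(v^{(j)})$. *)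

theory Defs
  imports "HOL-Probability.Probability"
begin

definition freq :: "(nat \<times> int) list \<Rightarrow> nat \<Rightarrow> int" where
  "freq ups i = sum_list (map snd (filter (\<lambda>u. fst u = i) ups))"

definition mult_approx :: "real \<Rightarrow> real \<Rightarrow> real \<Rightarrow> bool" where
  "mult_approx \<epsilon> x y \<longleftrightarrow> x \<le> y \<and> y < (1 + \<epsilon>) * x"

definition coins :: "(nat \<Rightarrow> bool) measure" where
  "coins = (\<Pi>\<^sub>M i\<in>UNIV. measure_pmf (bernoulli_pmf (1/2)))"

text \<open>Fresh randomness for each round r is R r (independent across rounds).\<close>

definition round_coins :: "(nat \<Rightarrow> nat \<Rightarrow> bool) measure" where
  "round_coins = (\<Pi>\<^sub>M j\<in>UNIV. coins)"

text \<open>The algorithm has state type 's, initial state s0,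
  its own random coin sequence rho (usable throughout the stream) and a step
  function mapping (rho, state, update) to (new state, estimate).
  The extended adversary consists of an initial persistent memory mem0 and a
  round function act taking the shared persistent random tape tau, the fresh
  random bits of the round, the persistent memory and the estimate memory
  (None = empty) to the update and the new persistent memory.
  The configuration after j rounds is (persistent memory, estimate memory,
  algorithm state, list of updates so far).\<close>

fun run :: "((nat \<Rightarrow> bool) \<Rightarrow> (nat \<Rightarrow> bool) \<Rightarrow> bool list \<Rightarrow> real option
              \<Rightarrow> (nat \<times> int) \<times> bool list) \<Rightarrow> bool list
            \<Rightarrow> ((nat \<Rightarrow> bool) \<Rightarrow> 's \<Rightarrow> nat \<times> int \<Rightarrow> 's \<times> real) \<Rightarrow> 's
            \<Rightarrow> (nat \<Rightarrow> bool) \<Rightarrow> (nat \<Rightarrow> nat \<Rightarrow> bool) \<Rightarrow> (nat \<Rightarrow> bool) \<Rightarrow> nat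
            \<Rightarrow> bool list \<times> real option \<times> 's \<times> (nat \<times> int) list" where
  "run act mem0 astep s0 \<tau> R \<rho> 0 = (mem0, None, s0, [])"
| "run act mem0 astep s0 \<tau> R \<rho> (Suc j) =
     (case run act mem0 astep s0 \<tau> R \<rho> j of (mem, est, s, ups) \<Rightarrow>
       (case act \<tau> (R j) mem est of (u, mem') \<Rightarrow>
         (case astep \<rho> s u of (s', y) \<Rightarrow> (mem', Some y, s', ups @ [u]))))"

definition fails ::
  "((nat \<Rightarrow> int) \<Rightarrow> real) \<Rightarrow> real \<Rightarrow> nat
   \<Rightarrow> ((nat \<Rightarrow> bool) \<Rightarrow> (nat \<Rightarrow> bool) \<Rightarrow> bool list \<Rightarrow> real option
              \<Rightarrow> (nat \<times> int) \<times> bool list) \<Rightarrow> bool list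
   \<Rightarrow> ((nat \<Rightarrow> bool) \<Rightarrow> 's \<Rightarrow> nat \<times> int \<Rightarrow> 's \<times> real) \<Rightarrow> 's
   \<Rightarrow> (nat \<Rightarrow> bool) \<Rightarrow> (nat \<Rightarrow> nat \<Rightarrow> bool) \<Rightarrow> (nat \<Rightarrow> bool) \<Rightarrow> bool" where
  "fails f \<epsilon> m act mem0 astep s0 \<tau> R \<rho> \<longleftrightarrow>
     (\<exists>j\<in>{1..m}. case run act mem0 astep s0 \<tau> R \<rho> j of (mem, est, s, ups) \<Rightarrow>
        \<not> mult_approx \<epsilon> (f (freq ups)) (the est))"

definition valid_ext_adv :: "nat \<Rightarrow> nat \<Rightarrow> bool list
   \<Rightarrow> ((nat \<Rightarrow> bool) \<Rightarrow> (nat \<Rightarrow> bool) \<Rightarrow> bool list \<Rightarrow> real option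
              \<Rightarrow> (nat \<times> int) \<times> bool list) \<Rightarrow> bool" where
  "valid_ext_adv n k mem0 act \<longleftrightarrow> length mem0 \<le> k \<and>
     (\<forall>\<tau> r mem est. case act \<tau> r mem est of ((i, d), mem') \<Rightarrow>
        i \<in> {1..n} \<and> d \<in> {-1, 1} \<and> length mem' \<le> k)"

definition valid_adv :: "nat \<Rightarrow> nat \<Rightarrow> bool list
   \<Rightarrow> ((nat \<Rightarrow> bool) \<Rightarrow> bool list \<Rightarrow> real option \<Rightarrow> (nat \<times> int) \<times> bool list) \<Rightarrow> bool" where
  "valid_adv n k mem0 act \<longleftrightarrow> length mem0 \<le> k \<and>
     (\<forall>r mem est. case act r mem est of ((i, d), mem') \<Rightarrow>
        i \<in> {1..n} \<and> d \<in> {-1, 1} \<and> length mem' \<le> k)"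

definition ext_fail_prob where
  "ext_fail_prob f \<epsilon> m act mem0 astep s0 =
     measure (coins \<Otimes>\<^sub>M (round_coins \<Otimes>\<^sub>M coins))
       {(\<tau>, R, \<rho>). fails f \<epsilon> m act mem0 astep s0 \<tau> R \<rho>}"

definition fail_prob where
  "fail_prob f \<epsilon> m act mem0 astep s0 =
     measure (round_coins \<Otimes>\<^sub>M coins)
       {(R, \<rho>). fails f \<epsilon> m (\<lambda>\<tau>. act) mem0 astep s0 (\<lambda>_. False) R \<rho>}"

end

theory Submission
  imports Defs
begin

text \<open>Averaging over the shared tape: the failure probability of the extended adversary is the
  mean, over the tape \<open>\<tau>\<close>, of the failure probability of the adversary with \<open>\<tau>\<close> fixed. Some
  tape therefore does at least as well as the average, and hard-wiring it into the round
  function yields an ordinary bounded-memory adversary with the same memory bound.\<close>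

lemma (in pair_prob_space) ex_section_measure_gt:
  assumes "measure (M1 \<Otimes>\<^sub>M M2) A > c"
  shows "\<exists>x. measure M2 (Pair x -` A) > c"
proof (rule ccontr)
  assume "\<not> ?thesis"
  then have sections_le: "measure M2 (Pair x -` A) \<le> c" for x
    by (simp add: not_less)
  then have "c \<ge> 0"
    using measure_nonneg order_trans by blast
  have "measure (M1 \<Otimes>\<^sub>M M2) A \<le> c"
  proof (cases "A \<in> sets (M1 \<Otimes>\<^sub>M M2)")
    case True
    have "emeasure (M1 \<Otimes>\<^sub>M M2) A = (\<integral>\<^sup>+x. emeasure M2 (Pair x -` A) \<partial>M1)"
      using True by (rule M2.emeasure_pair_measure_alt)
    also have "\<dots> \<le> (\<integral>\<^sup>+x. ennreal c \<partial>M1)"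
      using sections_le by (intro nn_integral_mono) (simp add: M2.emeasure_eq_measure ennreal_leI)
    also have "\<dots> = ennreal c"
      by (simp add: M1.emeasure_space_1)
    finally show ?thesis
      using \<open>c \<ge> 0\<close> by (simp add: P.emeasure_eq_measure)
  next
    case False
    then show ?thesis
      using \<open>c \<ge> 0\<close> by (simp add: measure_notin_sets)
  qed
  then show False
    using assms by simp
qed

lemma prob_space_coins: "prob_space coins"
  unfolding coins_def by (intro prob_space_PiM) (simp add: prob_space_measure_pmf)

lemma prob_space_round_coins: "prob_space round_coins"
  unfolding round_coins_def by (intro prob_space_PiM) (simp add: prob_space_coins)

lemma pair_prob_space_tape_rounds_coins:
  "pair_prob_space coins (round_coins \<Otimes>\<^sub>M coins)"
  by (intro pair_prob_space.intro pair_sigma_finite.intro prob_space_imp_sigma_finite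
      prob_space_coins prob_space_pair prob_space_round_coins)

lemma run_fixed_tape:
  "run (\<lambda>_. act \<tau>) mem0 astep s0 \<tau>' R \<rho> j = run act mem0 astep s0 \<tau> R \<rho> j"
  by (induction j) (auto split: prod.splits)

lemma fails_fixed_tape:
  "fails f \<epsilon> m (\<lambda>_. act \<tau>) mem0 astep s0 \<tau>' R \<rho> = fails f \<epsilon> m act mem0 astep s0 \<tau> R \<rho>"
  unfolding fails_def by (simp add: run_fixed_tape)

lemma fail_prob_fixed_tape:
  "fail_prob f \<epsilon> m (act \<tau>) mem0 astep s0 =
     measure (round_coins \<Otimes>\<^sub>M coins)
       (Pair \<tau> -` {(\<tau>, R, \<rho>). fails f \<epsilon> m act mem0 astep s0 \<tau> R \<rho>})"
  unfolding fail_prob_def fails_fixed_tape by (simp add: vimage_def)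

lemma valid_adv_fixed_tape:
  "valid_ext_adv n k mem0 act \<Longrightarrow> valid_adv n k mem0 (act \<tau>)"
  unfolding valid_ext_adv_def valid_adv_def by auto

theorem lemmaA1:
  fixes n m k :: nat and \<alpha> :: int and \<epsilon> \<delta> :: real
    and f :: "(nat \<Rightarrow> int) \<Rightarrow> real"
    and s0 :: 's and astep :: "(nat \<Rightarrow> bool) \<Rightarrow> 's \<Rightarrow> nat \<times> int \<Rightarrow> 's \<times> real"
    and mem0 :: "bool list"
    and act :: "(nat \<Rightarrow> bool) \<Rightarrow> (nat \<Rightarrow> bool) \<Rightarrow> bool list \<Rightarrow> real option
                 \<Rightarrow> (nat \<times> int) \<times> bool list"
  assumes "\<alpha> \<ge> 2" and "\<epsilon> > 0"
    and "\<forall>v. (\<forall>i. i \<notin> {1..n} \<longrightarrow> v i = 0) \<longrightarrow> f v = 0 \<or> (1 \<le> f v \<and> f v \<le> of_int \<alpha>)"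
    and "valid_ext_adv n k mem0 act"
    and "ext_fail_prob f \<epsilon> m act mem0 astep s0 > \<delta>"
  shows "\<exists>mem0' act'. valid_adv n k mem0' act' \<and> fail_prob f \<epsilon> m act' mem0' astep s0 > \<delta>"
proof -
  obtain \<tau> where "fail_prob f \<epsilon> m (act \<tau>) mem0 astep s0 > \<delta>"
    using pair_prob_space.ex_section_measure_gt[OF pair_prob_space_tape_rounds_coins] assms(5)
    unfolding ext_fail_prob_def fail_prob_fixed_tape by blast
  then show ?thesis
    using valid_adv_fixed_tape[OF assms(4)] by blast
qed

end
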